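(* Let $M$ be a pointed metric space such that the set $M'$ of cluster (accumulation) points of $M$ is infinite, and let $X$ be a non-zero Banach space. Then $\mathrm{Lip}_0(M,X)$ has the symmetric strong diameter two property.
   Context: All Banach spaces are real. $\mathrm{Lip}_0(M,X)$ is the Banach space of Lipschitz maps $M\to X$ vanishing at the base point, normed by the best Lipschitz constant. A slice of $B_Z$ is a set $\{z\in B_Z: f(z)>1-\alpha\}$ with $f\in Z^*$, $\alpha>0$. A Banach space $Z$ has the symmetric strong diameter two property (SSD2P) if for every $k\in\mathbb N$, every family of slices $S_1,\dots,S_k$ of $B_Z$ and every $\varepsilon>0$ there exist $x_i\in S_i$ ($1\le i\le k$) and $\varphi\in B_Z$ with $\|\varphi\|>1-\varepsilon$ such that $x_i\pm\varphi\in S_i$ for every $i\in\{1,\dots,k\}$. *)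

theory Defs
  imports "HOL-Analysis.Analysis"
begin

definition Lip0 :: "'a::metric_space \<Rightarrow> ('a \<Rightarrow> 'b::real_normed_vector) set" where
  "Lip0 p = {f. (\<exists>C. C-lipschitz_on UNIV f) \<and> f p = 0}"

definition lipnorm :: "('a::metric_space \<Rightarrow> 'b::real_normed_vector) \<Rightarrow> real" where
  "lipnorm f = Inf {C. C-lipschitz_on UNIV f}"

definition Lip0_ball :: "'a::metric_space \<Rightarrow> ('a \<Rightarrow> 'b::real_normed_vector) set" where
  "Lip0_ball p = {f \<in> Lip0 p. lipnorm f \<le> 1}"

definition Lip0_dual_sphere :: "'a::metric_space \<Rightarrow> (('a \<Rightarrow> 'b::real_normed_vector) \<Rightarrow> real) set" where
  "Lip0_dual_sphere p = {\<phi>.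
     (\<forall>f\<in>Lip0 p. \<forall>g\<in>Lip0 p. \<phi> (\<lambda>x. f x + g x) = \<phi> f + \<phi> g) \<and>
     (\<forall>c. \<forall>f\<in>Lip0 p. \<phi> (\<lambda>x. c *\<^sub>R f x) = c * \<phi> f) \<and>
     (\<exists>K. \<forall>f\<in>Lip0 p. \<bar>\<phi> f\<bar> \<le> K * lipnorm f) \<and>
     (SUP f\<in>Lip0_ball p. \<phi> f) = 1}"

definition Lip0_slice ::
  "'a::metric_space \<Rightarrow> (('a \<Rightarrow> 'b::real_normed_vector) \<Rightarrow> real) \<Rightarrow> real \<Rightarrow> ('a \<Rightarrow> 'b) set" where
  "Lip0_slice p \<phi> \<alpha> = {f \<in> Lip0_ball p. \<phi> f > 1 - \<alpha>}"

definition Lip0_SSD2P :: "'a::metric_space \<Rightarrow> ('a \<Rightarrow> 'b::real_normed_vector) itself \<Rightarrow> bool" where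
  "Lip0_SSD2P p (T :: ('a \<Rightarrow> 'b) itself) \<longleftrightarrow>
     (\<forall>(k::nat) (\<phi>s :: nat \<Rightarrow> ('a \<Rightarrow> 'b) \<Rightarrow> real) (\<alpha>s :: nat \<Rightarrow> real) \<epsilon>.
        (\<forall>i\<in>{1..k}. \<phi>s i \<in> Lip0_dual_sphere p \<and> \<alpha>s i > 0) \<and> \<epsilon> > 0 \<longrightarrow>
        (\<exists>(xs :: nat \<Rightarrow> 'a \<Rightarrow> 'b) (\<psi> :: 'a \<Rightarrow> 'b).
           (\<forall>i\<in>{1..k}. xs i \<in> Lip0_slice p (\<phi>s i) (\<alpha>s i)) \<and>
           \<psi> \<in> Lip0_ball p \<and> lipnorm \<psi> > 1 - \<epsilon> \<and>
           (\<forall>i\<in>{1..k}. (\<lambda>x. xs i x + \<psi> x) \<in> Lip0_slice p (\<phi>s i) (\<alpha>s i) \<and>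
                        (\<lambda>x. xs i x - \<psi> x) \<in> Lip0_slice p (\<phi>s i) (\<alpha>s i))))"

end

theory Submission
  imports Defs
begin

text \<open>Pick \<open>f\<^sub>i\<close> deep inside the slices and shrink them to \<open>F\<^sub>i = (1 - \<eta>) f\<^sub>i\<close>. Near a cluster
  point \<open>z\<close> each \<open>F\<^sub>i\<close> can be flattened, with a logarithmic ramp in \<open>d(x, z)\<close>, to a function \<open>g\<^sub>i\<close>
  that is constant on a small ball around \<open>z\<close> and still \<open>(1 - \<eta>/2)\<close>-Lipschitz; a tent \<open>\<psi>\<close> of
  Lipschitz norm \<open>1\<close> placed inside that ball then makes \<open>g\<^sub>i \<plusminus> \<psi>\<close> \<open>1\<close>-Lipschitz. The changes
  \<open>F\<^sub>i - g\<^sub>i\<close> and \<open>\<psi>\<close> are supported near \<open>z\<close>. Doing this at many well separated cluster points,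
  signed sums of the changes stay \<open>2\<close>-Lipschitz, so each \<open>\<phi>\<^sub>i\<close> sees them with a total weight
  independent of their number; hence at some point \<open>z\<close> they are almost invisible to all \<open>\<phi>\<^sub>i\<close>, and
  \<open>g\<^sub>i\<close>, \<open>g\<^sub>i \<plusminus> \<psi>\<close> stay in the slices.\<close>

lemma lipnorm_le: "C-lipschitz_on UNIV f \<Longrightarrow> lipnorm f \<le> C"
  unfolding lipnorm_def
  by (rule cInf_lower) (auto intro: bdd_belowI[where m=0] dest: lipschitz_on_nonneg)

lemma lipnorm_nonneg: "C-lipschitz_on UNIV f \<Longrightarrow> 0 \<le> lipnorm f"
  unfolding lipnorm_def
  by (rule cInf_greatest) (auto dest: lipschitz_on_nonneg)

lemma lipschitz_on_lipnorm:
  assumes "C-lipschitz_on UNIV f"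
  shows "(lipnorm f)-lipschitz_on UNIV f"
proof (rule lipschitz_onI)
  fix x y
  show "dist (f x) (f y) \<le> lipnorm f * dist x y"
  proof (cases "x = y")
    case False
    have "dist (f x) (f y) / dist x y \<le> lipnorm f"
      unfolding lipnorm_def
    proof (rule cInf_greatest)
      fix D assume "D \<in> {C. C-lipschitz_on UNIV f}"
      then show "dist (f x) (f y) / dist x y \<le> D"
        using False by (auto simp: divide_simps dest: lipschitz_onD)
    qed (use assms in auto)
    with False show ?thesis by (simp add: divide_simps)
  qed simp
qed (rule lipnorm_nonneg[OF assms])

lemma one_le_lipnorm:
  assumes "C-lipschitz_on UNIV f" "dist (f x) (f y) = dist x y" "x \<noteq> y"
  shows "1 \<le> lipnorm f"
  using lipschitz_onD[OF lipschitz_on_lipnorm[OF assms(1)], of x y] assms(2,3) by simp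

lemma Lip0I: "C-lipschitz_on UNIV f \<Longrightarrow> f p = 0 \<Longrightarrow> f \<in> Lip0 p"
  unfolding Lip0_def by auto

lemma Lip0_ballI: "C-lipschitz_on UNIV f \<Longrightarrow> C \<le> 1 \<Longrightarrow> f p = 0 \<Longrightarrow> f \<in> Lip0_ball p"
  unfolding Lip0_ball_def Lip0_def using lipnorm_le[of C f] by auto

lemma Lip0_ball_subset: "Lip0_ball p \<subseteq> Lip0 p"
  unfolding Lip0_ball_def by auto

lemma Lip0_ball_lipschitz: "f \<in> Lip0_ball p \<Longrightarrow> 1-lipschitz_on UNIV f"
  unfolding Lip0_ball_def Lip0_def by (auto intro: lipschitz_on_le lipschitz_on_lipnorm)

lemma Lip0_zero: "(\<lambda>x. 0) \<in> Lip0 p"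
  unfolding Lip0_def using lipschitz_on_constant by auto

lemma Lip0_add: "f \<in> Lip0 p \<Longrightarrow> g \<in> Lip0 p \<Longrightarrow> (\<lambda>x. f x + g x) \<in> Lip0 p"
  unfolding Lip0_def by (auto intro: lipschitz_on_add)

lemma Lip0_scaleR: "f \<in> Lip0 p \<Longrightarrow> (\<lambda>x. c *\<^sub>R f x) \<in> Lip0 p"
  unfolding Lip0_def by (auto intro: lipschitz_on_cmult)

lemma Lip0_sum:
  "finite Z \<Longrightarrow> (\<And>z. z \<in> Z \<Longrightarrow> u z \<in> Lip0 p) \<Longrightarrow> (\<lambda>x. \<Sum>z\<in>Z. s z *\<^sub>R u z x) \<in> Lip0 p"
proof (induction Z rule: finite_induct)
  case (insert a Z)
  then show ?case using Lip0_add[OF Lip0_scaleR[of "u a" p "s a"] insert.IH] by simp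
qed (simp add: Lip0_zero)

lemma Lip0_dual_sphere_add:
  "\<phi> \<in> Lip0_dual_sphere p \<Longrightarrow> f \<in> Lip0 p \<Longrightarrow> g \<in> Lip0 p \<Longrightarrow> \<phi> (\<lambda>x. f x + g x) = \<phi> f + \<phi> g"
  unfolding Lip0_dual_sphere_def by blast

lemma Lip0_dual_sphere_scaleR:
  "\<phi> \<in> Lip0_dual_sphere p \<Longrightarrow> f \<in> Lip0 p \<Longrightarrow> \<phi> (\<lambda>x. c *\<^sub>R f x) = c * \<phi> f"
  unfolding Lip0_dual_sphere_def by blast

lemma Lip0_dual_sphere_diff:
  assumes "\<phi> \<in> Lip0_dual_sphere p" "f \<in> Lip0 p" "g \<in> Lip0 p"
  shows "\<phi> (\<lambda>x. f x - g x) = \<phi> f - \<phi> g"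
proof -
  have "\<phi> (\<lambda>x. f x + (-1) *\<^sub>R g x) = \<phi> f - \<phi> g"
    using Lip0_dual_sphere_add[OF assms(1,2) Lip0_scaleR[OF assms(3), of "-1"]]
      Lip0_dual_sphere_scaleR[OF assms(1,3), of "-1"] by simp
  then show ?thesis by simp
qed

lemma Lip0_dual_sphere_sum:
  assumes \<phi>: "\<phi> \<in> Lip0_dual_sphere p" and "finite Z" "\<And>z. z \<in> Z \<Longrightarrow> u z \<in> Lip0 p"
  shows "\<phi> (\<lambda>x. \<Sum>z\<in>Z. s z *\<^sub>R u z x) = (\<Sum>z\<in>Z. s z * \<phi> (u z))"
  using assms(2,3)
proof (induction Z rule: finite_induct)
  case empty
  show ?case using Lip0_dual_sphere_scaleR[OF \<phi> Lip0_zero, of 0] by simp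
next
  case (insert a Z)
  then have "\<phi> (\<lambda>x. \<Sum>z\<in>insert a Z. s z *\<^sub>R u z x)
      = \<phi> (\<lambda>x. s a *\<^sub>R u a x) + \<phi> (\<lambda>x. \<Sum>z\<in>Z. s z *\<^sub>R u z x)"
    by (simp add: Lip0_dual_sphere_add[OF \<phi>] Lip0_scaleR Lip0_sum)
  with insert show ?case by (simp add: Lip0_dual_sphere_scaleR[OF \<phi>])
qed

lemma Lip0_dual_sphere_bounded:
  "\<phi> \<in> Lip0_dual_sphere p \<Longrightarrow> \<exists>K. \<forall>f\<in>Lip0 p. \<bar>\<phi> f\<bar> \<le> K * lipnorm f"
  unfolding Lip0_dual_sphere_def by blast

lemma Lip0_dual_sphere_almost_attained:
  fixes \<phi> :: "('a::metric_space \<Rightarrow> 'b::real_normed_vector) \<Rightarrow> real"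
  assumes \<phi>: "\<phi> \<in> Lip0_dual_sphere p" and "0 < \<delta>"
  obtains f where "f \<in> Lip0_ball p" "1 - \<delta> < \<phi> f" "\<phi> f \<le> 1"
proof -
  obtain K where K: "\<forall>f\<in>Lip0 p. \<bar>\<phi> f\<bar> \<le> K * lipnorm f"
    using Lip0_dual_sphere_bounded[OF \<phi>] by blast
  have sup: "(SUP f\<in>Lip0_ball p. \<phi> f) = 1"
    using \<phi> unfolding Lip0_dual_sphere_def by blast
  have bdd: "bdd_above (\<phi> ` Lip0_ball p)"
  proof (rule bdd_aboveI2)
    fix f :: "'a \<Rightarrow> 'b" assume f: "f \<in> Lip0_ball p"
    then have l: "0 \<le> lipnorm f" "lipnorm f \<le> 1" and "\<bar>\<phi> f\<bar> \<le> K * lipnorm f"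
      using K Lip0_ball_subset by (auto simp: Lip0_ball_def Lip0_def intro: lipnorm_nonneg)
    moreover have "K * lipnorm f \<le> \<bar>K\<bar> * lipnorm f" using l by (simp add: mult_right_mono)
    moreover have "\<bar>K\<bar> * lipnorm f \<le> \<bar>K\<bar>" using l by (simp add: mult_left_le)
    ultimately show "\<phi> f \<le> \<bar>K\<bar>" by linarith
  qed
  have "(\<lambda>x. 0) \<in> Lip0_ball p"
    by (rule Lip0_ballI[OF lipschitz_on_constant]) simp_all
  then obtain f where "f \<in> Lip0_ball p" "1 - \<delta> < \<phi> f"
    using less_cSUP_iff[OF _ bdd, of "1 - \<delta>"] sup \<open>0 < \<delta>\<close> by auto
  moreover have "\<phi> f \<le> 1" using cSUP_upper[OF \<open>f \<in> Lip0_ball p\<close> bdd] sup by simp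
  ultimately show thesis by (rule that)
qed

lemma Lip0_dual_sphere_almost_norming_contraction:
  assumes \<phi>: "\<phi> \<in> Lip0_dual_sphere p" and "0 < \<delta>" "0 \<le> \<eta>" "\<eta> \<le> 1"
  obtains F where "(1-\<eta>)-lipschitz_on UNIV F" "F p = 0" "1 - \<delta> - \<eta> < \<phi> F"
proof -
  obtain f where f: "f \<in> Lip0_ball p" "1 - \<delta> < \<phi> f" "\<phi> f \<le> 1"
    using Lip0_dual_sphere_almost_attained[OF assms(1,2)] .
  have "(1-\<eta>)-lipschitz_on UNIV (\<lambda>x. (1-\<eta>) *\<^sub>R f x)"
    using lipschitz_on_cmult_nonneg[OF Lip0_ball_lipschitz[OF f(1)], of "1-\<eta>"] assms(4) by simp
  moreover have "(1-\<eta>) *\<^sub>R f p = 0" using f(1) by (simp add: Lip0_ball_def Lip0_def)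
  moreover have "\<phi> (\<lambda>x. (1-\<eta>) *\<^sub>R f x) = \<phi> f - \<eta> * \<phi> f"
    using Lip0_dual_sphere_scaleR[OF \<phi>, of f "1-\<eta>"] f(1) Lip0_ball_subset
    by (auto simp: algebra_simps)
  moreover have "\<eta> * \<phi> f \<le> \<eta>" using f(3) \<open>0 \<le> \<eta>\<close> by (simp add: mult_left_le)
  ultimately show thesis using f(2) by (intro that[of "\<lambda>x. (1-\<eta>) *\<^sub>R f x"]) simp_all
qed

lemma Lip0_dual_sphere_almost_norming_contractions:
  assumes \<phi>: "\<And>i. i \<in> I \<Longrightarrow> \<phi> i \<in> Lip0_dual_sphere p" and "0 < \<eta>" "\<eta> \<le> 1"
  shows "\<exists>F. \<forall>i\<in>I. (1-\<eta>)-lipschitz_on UNIV (F i) \<and> F i p = 0 \<and> 1 - 2*\<eta> < \<phi> i (F i)"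
proof -
  have "\<forall>i\<in>I. \<exists>F. (1-\<eta>)-lipschitz_on UNIV F \<and> F p = 0 \<and> 1 - 2*\<eta> < \<phi> i F"
  proof
    fix i assume "i \<in> I"
    obtain F where "(1-\<eta>)-lipschitz_on UNIV F" "F p = 0" "1 - \<eta> - \<eta> < \<phi> i F"
      using Lip0_dual_sphere_almost_norming_contraction[OF \<phi>[OF \<open>i \<in> I\<close>], of \<eta> \<eta>] assms(2,3) by auto
    then show "\<exists>F. (1-\<eta>)-lipschitz_on UNIV F \<and> F p = 0 \<and> 1 - 2*\<eta> < \<phi> i F" by auto
  qed
  then show ?thesis by (rule bchoice)
qed

lemma Lip0_slice_symmetric:
  assumes \<phi>: "\<phi> \<in> Lip0_dual_sphere p" and g: "g \<in> Lip0_ball p" and \<psi>: "\<psi> \<in> Lip0_ball p"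
    and "(\<lambda>x. g x + \<psi> x) \<in> Lip0_ball p" "(\<lambda>x. g x - \<psi> x) \<in> Lip0_ball p"
    and "1 - \<alpha> < \<phi> g - \<bar>\<phi> \<psi>\<bar>"
  shows "g \<in> Lip0_slice p \<phi> \<alpha>" "(\<lambda>x. g x + \<psi> x) \<in> Lip0_slice p \<phi> \<alpha>"
    "(\<lambda>x. g x - \<psi> x) \<in> Lip0_slice p \<phi> \<alpha>"
proof -
  have "g \<in> Lip0 p" "\<psi> \<in> Lip0 p" using g \<psi> Lip0_ball_subset by auto
  then have "\<phi> (\<lambda>x. g x + \<psi> x) = \<phi> g + \<phi> \<psi>" "\<phi> (\<lambda>x. g x - \<psi> x) = \<phi> g - \<phi> \<psi>"
    using Lip0_dual_sphere_add[OF \<phi>] Lip0_dual_sphere_diff[OF \<phi>] by auto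
  with assms show "g \<in> Lip0_slice p \<phi> \<alpha>" "(\<lambda>x. g x + \<psi> x) \<in> Lip0_slice p \<phi> \<alpha>"
    "(\<lambda>x. g x - \<psi> x) \<in> Lip0_slice p \<phi> \<alpha>"
    unfolding Lip0_slice_def by auto
qed

section \<open>Perturbations near separated points\<close>

lemma card_separated_near_le_1:
  assumes "finite Z" and sep: "\<And>z z'. z \<in> Z \<Longrightarrow> z' \<in> Z \<Longrightarrow> z \<noteq> z' \<Longrightarrow> 2*R \<le> dist z z'"
  shows "card {z\<in>Z. dist x z < R} \<le> 1"
proof -
  have "a = b" if "a \<in> Z" "b \<in> Z" "dist x a < R" "dist x b < R" for a b
  proof (rule ccontr)
    assume "a \<noteq> b"
    then have "2*R \<le> dist a b" using sep that by auto
    moreover have "dist a b \<le> dist x a + dist x b" by (metis dist_commute dist_triangle)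
    ultimately show False using that by auto
  qed
  then show ?thesis using assms(1) by (auto simp: card_le_Suc0_iff_eq)
qed

lemma lipschitz_on_sum_disjoint_supports:
  fixes u :: "'a::metric_space \<Rightarrow> 'a \<Rightarrow> 'b::real_normed_vector"
  assumes Z: "finite Z" and u: "\<And>z. z \<in> Z \<Longrightarrow> C-lipschitz_on UNIV (u z)"
    and supp: "\<And>z x. z \<in> Z \<Longrightarrow> u z x \<noteq> 0 \<Longrightarrow> dist x z < R"
    and sep: "\<And>z z'. z \<in> Z \<Longrightarrow> z' \<in> Z \<Longrightarrow> z \<noteq> z' \<Longrightarrow> 2*R \<le> dist z z'"
    and s: "\<And>z. z \<in> Z \<Longrightarrow> \<bar>s z\<bar> \<le> 1" and "0 \<le> C"
  shows "(2*C)-lipschitz_on UNIV (\<lambda>x. \<Sum>z\<in>Z. s z *\<^sub>R u z x)"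
proof (rule lipschitz_onI)
  fix x y :: 'a
  define d where "d = C * dist x y"
  have "0 \<le> d" using \<open>0 \<le> C\<close> by (simp add: d_def)
  have term_le: "norm (s z *\<^sub>R u z x - s z *\<^sub>R u z y)
      \<le> (if dist x z < R then d else 0) + (if dist y z < R then d else 0)" if z: "z \<in> Z" for z
  proof -
    have "norm (s z *\<^sub>R u z x - s z *\<^sub>R u z y) = \<bar>s z\<bar> * norm (u z x - u z y)"
      by (metis norm_scaleR scaleR_right_diff_distrib)
    also have "\<dots> \<le> norm (u z x - u z y)" using s[OF z] by (simp add: mult_left_le_one_le)
    also have "\<dots> \<le> d" using lipschitz_onD[OF u[OF z], of x y] by (simp add: dist_norm d_def)
    finally have "norm (s z *\<^sub>R u z x - s z *\<^sub>R u z y) \<le> d" .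
    moreover have "u z x = 0 \<and> u z y = 0" if "\<not> dist x z < R" "\<not> dist y z < R"
      using supp[OF z] that by blast
    ultimately show ?thesis using \<open>0 \<le> d\<close> by auto
  qed
  have "dist (\<Sum>z\<in>Z. s z *\<^sub>R u z x) (\<Sum>z\<in>Z. s z *\<^sub>R u z y)
      \<le> (\<Sum>z\<in>Z. norm (s z *\<^sub>R u z x - s z *\<^sub>R u z y))"
    by (simp add: dist_norm flip: sum_subtractf) (rule norm_sum)
  also have "\<dots> \<le> (\<Sum>z\<in>Z. (if dist x z < R then d else 0) + (if dist y z < R then d else 0))"
    by (rule sum_mono) (rule term_le)
  also have "\<dots> = d * card {z\<in>Z. dist x z < R} + d * card {z\<in>Z. dist y z < R}"
    using Z by (simp add: sum.distrib sum.If_cases Int_def conj_commute)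
  also have "\<dots> \<le> d + d"
    using card_separated_near_le_1[OF Z sep] \<open>0 \<le> C\<close>
    by (intro add_mono) (auto simp: d_def mult_left_le)
  finally show "dist (\<Sum>z\<in>Z. s z *\<^sub>R u z x) (\<Sum>z\<in>Z. s z *\<^sub>R u z y) \<le> 2 * C * dist x y"
    by (simp add: d_def)
qed (simp add: \<open>0 \<le> C\<close>)

text \<open>The signs are chosen so that the functional adds up the absolute values; the signed sum
  has norm at most \<open>2 C\<close> because at most one summand is non-zero near any point.\<close>
lemma Lip0_dual_sphere_sum_abs_le:
  fixes u :: "'a::metric_space \<Rightarrow> 'a \<Rightarrow> 'b::real_normed_vector"
  assumes \<phi>: "\<phi> \<in> Lip0_dual_sphere p" and K: "\<forall>f\<in>Lip0 p. \<bar>\<phi> f\<bar> \<le> K * lipnorm f"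
    and Z: "finite Z" and u: "\<And>z. z \<in> Z \<Longrightarrow> u z \<in> Lip0 p"
    and lip: "\<And>z. z \<in> Z \<Longrightarrow> C-lipschitz_on UNIV (u z)" and "0 \<le> C"
    and supp: "\<And>z x. z \<in> Z \<Longrightarrow> u z x \<noteq> 0 \<Longrightarrow> dist x z < R"
    and sep: "\<And>z z'. z \<in> Z \<Longrightarrow> z' \<in> Z \<Longrightarrow> z \<noteq> z' \<Longrightarrow> 2*R \<le> dist z z'"
  shows "(\<Sum>z\<in>Z. \<bar>\<phi> (u z)\<bar>) \<le> 2 * C * \<bar>K\<bar>"
proof -
  define s where "s z = sgn (\<phi> (u z))" for z
  define v where "v = (\<lambda>x. \<Sum>z\<in>Z. s z *\<^sub>R u z x)"
  have v: "(2*C)-lipschitz_on UNIV v"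
    unfolding v_def using \<open>0 \<le> C\<close>
    by (intro lipschitz_on_sum_disjoint_supports[OF Z lip supp sep]) (auto simp: s_def sgn_real_def)
  have "(\<Sum>z\<in>Z. \<bar>\<phi> (u z)\<bar>) = (\<Sum>z\<in>Z. s z * \<phi> (u z))"
    by (simp add: s_def abs_sgn mult.commute)
  also have "\<dots> = \<phi> v" unfolding v_def using Lip0_dual_sphere_sum[OF \<phi> Z u] by simp
  also have "\<dots> \<le> K * lipnorm v"
  proof -
    have "v \<in> Lip0 p" unfolding v_def by (rule Lip0_sum[OF Z u])
    then show ?thesis using K abs_le_D1 by blast
  qed
  also have "\<dots> \<le> \<bar>K\<bar> * lipnorm v" using lipnorm_nonneg[OF v] by (simp add: mult_right_mono)
  also have "\<dots> \<le> \<bar>K\<bar> * (2*C)" using lipnorm_le[OF v] by (simp add: mult_left_mono)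
  finally show ?thesis by (simp add: algebra_simps)
qed

lemma finite_separated:
  fixes A :: "'a::metric_space set"
  assumes "finite A"
  obtains d where "0 < d" "\<And>a b. a \<in> A \<Longrightarrow> b \<in> A \<Longrightarrow> a \<noteq> b \<Longrightarrow> d \<le> dist a b"
proof -
  have "\<forall>a\<in>A. \<exists>\<delta>>0. \<forall>x\<in>A. x \<noteq> a \<longrightarrow> \<delta> \<le> dist a x"
    using finite_set_avoid[OF assms] by blast
  then obtain \<delta> where \<delta>: "\<And>a. a \<in> A \<Longrightarrow> 0 < \<delta> a \<and> (\<forall>x\<in>A. x \<noteq> a \<longrightarrow> \<delta> a \<le> dist a x)"
    by metis
  show thesis
  proof (rule that[of "Min (insert 1 (\<delta> ` A))"])
    show "0 < Min (insert 1 (\<delta> ` A))" using assms \<delta> by (auto simp: Min_gr_iff)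
    fix a b assume "a \<in> A" "b \<in> A" "a \<noteq> b"
    then have "Min (insert 1 (\<delta> ` A)) \<le> \<delta> a" using assms by (intro Min_le) auto
    with \<delta>[OF \<open>a \<in> A\<close>] \<open>b \<in> A\<close> \<open>a \<noteq> b\<close> show "Min (insert 1 (\<delta> ` A)) \<le> dist a b" by auto
  qed
qed

lemma exists_separated_limit_points:
  fixes p :: "'a::metric_space"
  assumes "infinite {x::'a. x islimpt UNIV}"
  obtains Z R where "finite Z" "card Z = N" "\<And>z. z \<in> Z \<Longrightarrow> z islimpt UNIV" "0 < R"
    "\<And>z. z \<in> Z \<Longrightarrow> R \<le> dist p z" "\<And>z z'. z \<in> Z \<Longrightarrow> z' \<in> Z \<Longrightarrow> z \<noteq> z' \<Longrightarrow> 2*R \<le> dist z z'"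
proof -
  have "infinite ({x::'a. x islimpt UNIV} - {p})" using assms by simp
  then obtain Z where Z: "finite Z" "card Z = N" "Z \<subseteq> {x::'a. x islimpt UNIV} - {p}"
    using infinite_arbitrarily_large by blast
  obtain d where d: "0 < d" "\<And>a b. a \<in> insert p Z \<Longrightarrow> b \<in> insert p Z \<Longrightarrow> a \<noteq> b \<Longrightarrow> d \<le> dist a b"
    using finite_separated[of "insert p Z"] Z(1) by blast
  show thesis
  proof (rule that[of Z "d/2"])
    show "d/2 \<le> dist p z" if "z \<in> Z" for z
    proof -
      have "p \<noteq> z" using that Z(3) by blast
      with d(2)[of p z] that show ?thesis using d(1) by simp
    qed
  qed (use Z d in auto)
qed

lemma exists_less_of_sum_less:
  fixes Q :: "'a \<Rightarrow> real"
  assumes "finite Z" "(\<Sum>z\<in>Z. Q z) < real (card Z) * \<beta>"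
  shows "\<exists>z\<in>Z. Q z < \<beta>"
proof (rule ccontr)
  assume "\<not> (\<exists>z\<in>Z. Q z < \<beta>)"
  then have "real (card Z) * \<beta> \<le> (\<Sum>z\<in>Z. Q z)" by (intro sum_bounded_below) (auto simp: not_less)
  with assms(2) show False by simp
qed

section \<open>Flattening near a point\<close>

text \<open>The ramp rises from \<open>0\<close> for \<open>t \<le> r\<close> to \<open>1\<close> for \<open>t \<ge> r e\<^sup>c\<close> with slope at most \<open>1/(c t)\<close>;
  in \<open>flatten\<close> the factor \<open>1/t\<close> compensates the growth of \<open>\<parallel>f x - f z\<parallel> \<le> L t\<close>, so flattening \<open>f\<close>
  near \<open>z\<close> costs only a factor \<open>1 + 1/c\<close> in the Lipschitz constant.\<close>
definition log_ramp :: "real \<Rightarrow> real \<Rightarrow> real \<Rightarrow> real" where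
  "log_ramp r c t = min 1 (ln (max t r / r) / c)"

definition flatten :: "real \<Rightarrow> real \<Rightarrow> 'a::metric_space \<Rightarrow> ('a \<Rightarrow> 'b::real_normed_vector) \<Rightarrow> 'a \<Rightarrow> 'b"
  where "flatten r c z f x = f z + log_ramp r c (dist x z) *\<^sub>R (f x - f z)"

definition tent :: "'a::metric_space \<Rightarrow> real \<Rightarrow> 'b::real_normed_vector \<Rightarrow> 'a \<Rightarrow> 'b" where
  "tent w \<tau> e x = max 0 (\<tau> - dist x w) *\<^sub>R e"

lemma log_ramp_nonneg: "0 < r \<Longrightarrow> 0 < c \<Longrightarrow> 0 \<le> log_ramp r c t"
  unfolding log_ramp_def by (auto intro!: divide_nonneg_pos ln_ge_zero simp: field_simps)

lemma log_ramp_le_1: "log_ramp r c t \<le> 1"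
  unfolding log_ramp_def by simp

lemma log_ramp_eq_0: "0 < r \<Longrightarrow> t \<le> r \<Longrightarrow> log_ramp r c t = 0"
  unfolding log_ramp_def by (simp add: max_def)

lemma log_ramp_eq_1:
  assumes "0 < r" "0 < c" "r * exp c \<le> t"
  shows "log_ramp r c t = 1"
proof -
  have "r \<le> r * exp c" using assms by simp
  then have "r \<le> t" using assms(3) by linarith
  have "c \<le> ln (t / r)"
    using assms \<open>r \<le> t\<close> by (subst ln_ge_iff) (auto simp: field_simps)
  then show ?thesis using assms \<open>r \<le> t\<close> unfolding log_ramp_def by (simp add: max_def field_simps)
qed

lemma log_ramp_increment:
  assumes "0 < r" "0 < c" "0 \<le> b" "b \<le> a"
  shows "0 \<le> log_ramp r c a - log_ramp r c b"
    and "(log_ramp r c a - log_ramp r c b) * b \<le> (a - b) / c"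
proof -
  define A B where "A = max a r" "B = max b r"
  have AB: "0 < B" "B \<le> A" "b \<le> B" "A - B \<le> a - b" using assms by (auto simp: A_B_def max_def)
  have mono: "ln (B/r) \<le> ln (A/r)" using AB assms by (simp add: divide_right_mono)
  then show "0 \<le> log_ramp r c a - log_ramp r c b"
    unfolding log_ramp_def A_B_def[symmetric] using assms(2) by (smt (verit) divide_right_mono)
  have "log_ramp r c a - log_ramp r c b \<le> ln (A/r)/c - ln (B/r)/c"
    unfolding log_ramp_def A_B_def[symmetric] using mono assms(2) by (smt (verit) divide_right_mono)
  also have "\<dots> = ln (A/B) / c" using AB assms by (simp add: ln_div diff_divide_distrib)
  also have "\<dots> \<le> (A/B - 1) / c" using AB assms by (intro divide_right_mono ln_le_minus_one) auto
  finally have "(log_ramp r c a - log_ramp r c b) * b \<le> (A/B - 1)/c * b"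
    using assms by (intro mult_right_mono) auto
  also have "\<dots> = (A - B) / c * (b / B)" using AB by (simp add: field_simps)
  also have "\<dots> \<le> (A - B) / c" using AB assms by (intro mult_left_le) (auto simp: divide_simps)
  also have "\<dots> \<le> (a - b) / c" using AB assms by (simp add: divide_right_mono)
  finally show "(log_ramp r c a - log_ramp r c b) * b \<le> (a - b) / c" .
qed

lemma lipschitz_on_flatten:
  fixes f :: "'a::metric_space \<Rightarrow> 'b::real_normed_vector"
  assumes f: "L-lipschitz_on UNIV f" and r: "0 < r" and c: "0 < c"
  shows "(L * (1 + 1/c))-lipschitz_on UNIV (flatten r c z f)"
proof -
  let ?g = "flatten r c z f" and ?\<rho> = "log_ramp r c"
  have "0 \<le> L" using lipschitz_on_nonneg[OF f] .
  have farther: "dist (?g x) (?g y) \<le> L * (1 + 1/c) * dist x y" if "dist y z \<le> dist x z" for x y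
  proof -
    define a b d where "a = dist x z" "b = dist y z" "d = dist x y"
    have "a - b \<le> d" unfolding a_b_d_def by (metis dist_triangle diff_le_eq)
    have incr: "0 \<le> ?\<rho> a - ?\<rho> b" "(?\<rho> a - ?\<rho> b) * b \<le> (a - b) / c"
      using log_ramp_increment[OF r c, of b a] that by (auto simp: a_b_d_def)
    have "?g x - ?g y = ?\<rho> a *\<^sub>R (f x - f y) + (?\<rho> a - ?\<rho> b) *\<^sub>R (f y - f z)"
      unfolding flatten_def a_b_d_def by (simp add: algebra_simps)
    then have "dist (?g x) (?g y) = norm (?\<rho> a *\<^sub>R (f x - f y) + (?\<rho> a - ?\<rho> b) *\<^sub>R (f y - f z))"
      by (simp only: dist_norm)
    also have "\<dots> \<le> norm (?\<rho> a *\<^sub>R (f x - f y)) + norm ((?\<rho> a - ?\<rho> b) *\<^sub>R (f y - f z))"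
      by (rule norm_triangle_ineq)
    also have "\<dots> = ?\<rho> a * norm (f x - f y) + (?\<rho> a - ?\<rho> b) * norm (f y - f z)"
      using log_ramp_nonneg[OF r c, of a] incr(1) by simp
    also have "\<dots> \<le> 1 * (L * d) + (?\<rho> a - ?\<rho> b) * (L * b)"
      using lipschitz_onD[OF f, of x y] lipschitz_onD[OF f, of y z] log_ramp_nonneg[OF r c, of a]
        log_ramp_le_1[of r c a] incr(1)
      by (intro add_mono mult_mono) (auto simp: dist_norm a_b_d_def)
    also have "\<dots> = L * d + L * ((?\<rho> a - ?\<rho> b) * b)" by (simp add: algebra_simps)
    also have "\<dots> \<le> L * d + L * ((a - b) / c)"
      using incr(2) \<open>0 \<le> L\<close> by (intro add_left_mono mult_left_mono) auto
    also have "\<dots> \<le> L * d + L * (d / c)"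
      using \<open>a - b \<le> d\<close> \<open>0 \<le> L\<close> c by (intro add_left_mono mult_left_mono divide_right_mono) auto
    finally show ?thesis by (simp add: a_b_d_def algebra_simps)
  qed
  show ?thesis
  proof (rule lipschitz_onI)
    fix x y
    show "dist (?g x) (?g y) \<le> L * (1 + 1/c) * dist x y"
      using farther[of y x] farther[of x y] by (cases "dist y z \<le> dist x z") (auto simp: dist_commute)
  qed (use \<open>0 \<le> L\<close> c in auto)
qed

lemma lipschitz_on_flatten_contraction:
  assumes "(1-\<eta>)-lipschitz_on UNIV f" "0 < \<eta>" "0 < r"
  shows "(1 - \<eta>/2)-lipschitz_on UNIV (flatten r (2/\<eta>) z f)"
proof -
  have "((1-\<eta>) * (1 + \<eta>/2))-lipschitz_on UNIV (flatten r (2/\<eta>) z f)"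
    using lipschitz_on_flatten[OF assms(1,3), of "2/\<eta>"] assms(2) by simp
  moreover have "(1-\<eta>) * (1 + \<eta>/2) = 1 - \<eta>/2 - \<eta>*\<eta>/2"
    by (simp add: algebra_simps add_divide_distrib diff_divide_distrib)
  then have "(1-\<eta>) * (1 + \<eta>/2) \<le> 1 - \<eta>/2" by simp
  ultimately show ?thesis by (rule lipschitz_on_le)
qed

lemma flatten_eq_center: "0 < r \<Longrightarrow> dist x z \<le> r \<Longrightarrow> flatten r c z f x = f z"
  by (simp add: flatten_def log_ramp_eq_0)

lemma flatten_eq_far: "0 < r \<Longrightarrow> 0 < c \<Longrightarrow> r * exp c \<le> dist x z \<Longrightarrow> flatten r c z f x = f x"
  by (simp add: flatten_def log_ramp_eq_1)

lemma lipschitz_on_tent: "norm e = 1 \<Longrightarrow> 1-lipschitz_on UNIV (tent w \<tau> e)"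
proof (rule lipschitz_onI)
  fix x y
  assume "norm e = 1"
  then have "dist (tent w \<tau> e x) (tent w \<tau> e y) = \<bar>max 0 (\<tau> - dist x w) - max 0 (\<tau> - dist y w)\<bar>"
    by (simp add: tent_def dist_norm flip: scaleR_left_diff_distrib)
  also have "\<dots> \<le> \<bar>dist x w - dist y w\<bar>" by (auto simp: max_def)
  also have "\<dots> \<le> dist x y" using abs_dist_diff_le[of x w y] by (simp add: dist_commute)
  finally show "dist (tent w \<tau> e x) (tent w \<tau> e y) \<le> 1 * dist x y" by simp
qed simp

lemma norm_tent_le: "norm e = 1 \<Longrightarrow> 0 \<le> \<tau> \<Longrightarrow> norm (tent w \<tau> e x) \<le> \<tau>"
  by (simp add: tent_def)

lemma tent_eq_0: "\<tau> \<le> dist x w \<Longrightarrow> tent w \<tau> e x = 0"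
  by (simp add: tent_def)

text \<open>Near \<open>z\<close>, where \<open>g\<close> is constant, only \<open>\<psi>\<close> varies; away from the support of \<open>\<psi>\<close> only \<open>g\<close>
  varies; between the two regions the distance is at least \<open>r/2\<close>, so the slack \<open>\<eta>/2\<close> in the
  Lipschitz constant of \<open>g\<close> absorbs the height \<open>\<tau>\<close> of \<open>\<psi>\<close>.\<close>
lemma lipschitz_on_add_bump:
  fixes g \<psi> :: "'a::metric_space \<Rightarrow> 'b::real_normed_vector"
  assumes g: "(1 - \<eta>/2)-lipschitz_on UNIV g" and \<eta>: "0 < \<eta>" "\<eta> \<le> 1/2"
    and g_center: "\<And>x. dist x z \<le> r \<Longrightarrow> g x = g z"
    and \<psi>: "1-lipschitz_on UNIV \<psi>" and \<psi>_far: "\<And>x. 2*\<tau> \<le> dist x z \<Longrightarrow> \<psi> x = 0"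
    and \<psi>_bound: "\<And>x. norm (\<psi> x) \<le> \<tau>" and \<tau>: "\<tau> \<le> \<eta>*r/8" and r: "0 < r"
    and s: "\<bar>s\<bar> = 1"
  shows "1-lipschitz_on UNIV (\<lambda>x. g x + s *\<^sub>R \<psi> x)"
proof -
  have "\<eta> * r \<le> r/2" using mult_right_mono[OF \<eta>(2), of r] r by simp
  then have small: "2*\<tau> \<le> r/4" using \<tau> r by linarith
  have across: "dist (g x + s *\<^sub>R \<psi> x) (g y + s *\<^sub>R \<psi> y) \<le> dist x y"
    if x: "dist x z < 2*\<tau>" and y: "r < dist y z" for x y
  proof -
    have "dist y z \<le> dist x y + dist x z" by (metis dist_commute dist_triangle)
    then have xy: "r/2 \<le> dist x y" using x y small r by linarith
    have "\<psi> y = 0" using \<psi>_far[of y] y small r by linarith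
    then have "dist (g x + s *\<^sub>R \<psi> x) (g y + s *\<^sub>R \<psi> y) = norm ((g x - g y) + s *\<^sub>R \<psi> x)"
      by (simp add: dist_norm algebra_simps)
    also have "\<dots> \<le> norm (g x - g y) + \<tau>"
      using norm_triangle_ineq[of "g x - g y" "s *\<^sub>R \<psi> x"] \<psi>_bound[of x] s by simp
    also have "\<dots> \<le> (1 - \<eta>/2) * dist x y + \<eta> * (r/2) / 4"
      using lipschitz_onD[OF g, of x y] \<tau> by (simp add: dist_norm)
    also have "\<dots> \<le> (1 - \<eta>/2) * dist x y + \<eta> * dist x y / 4"
      using xy \<eta> by (intro add_left_mono divide_right_mono mult_left_mono) auto
    also have "\<dots> \<le> dist x y" using \<eta> by (simp add: algebra_simps)
    finally show ?thesis .
  qed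
  show ?thesis
  proof (rule lipschitz_onI)
    fix x y
    consider "dist x z \<le> r" "dist y z \<le> r" | "2*\<tau> \<le> dist x z" "2*\<tau> \<le> dist y z"
      | "dist x z < 2*\<tau>" "r < dist y z" | "dist y z < 2*\<tau>" "r < dist x z"
      using small r by linarith
    then show "dist (g x + s *\<^sub>R \<psi> x) (g y + s *\<^sub>R \<psi> y) \<le> 1 * dist x y"
    proof cases
      case 1
      then have "dist (g x + s *\<^sub>R \<psi> x) (g y + s *\<^sub>R \<psi> y) = norm (\<psi> x - \<psi> y)"
        using g_center[OF 1(1)] g_center[OF 1(2)] s by (simp add: dist_norm flip: scaleR_right_diff_distrib)
      then show ?thesis using lipschitz_onD[OF \<psi>, of x y] by (simp add: dist_norm)
    next
      case 2
      have "(1 - \<eta>/2) * dist x y \<le> dist x y" using \<eta> by (simp add: mult_left_le_one_le)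
      with 2 show ?thesis using \<psi>_far lipschitz_onD[OF g, of x y] by simp
    qed (use across[of x y] across[of y x] in \<open>simp_all add: dist_commute\<close>)
  qed simp
qed

lemma exists_symmetric_bump:
  fixes z :: "'a::metric_space" and e :: "'b::real_normed_vector"
  assumes z: "z islimpt UNIV" and e: "norm e = 1" and \<eta>: "0 < \<eta>" "\<eta> \<le> 1/2" and R: "0 < R"
  obtains \<psi> :: "'a \<Rightarrow> 'b"
  where "1-lipschitz_on UNIV \<psi>" "1 \<le> lipnorm \<psi>" "\<And>x. \<psi> x \<noteq> 0 \<Longrightarrow> dist x z < R"
    "\<And>f s. (1-\<eta>)-lipschitz_on UNIV f \<Longrightarrow> \<bar>s\<bar> = 1 \<Longrightarrow>
      1-lipschitz_on UNIV (\<lambda>x. flatten (R / exp (2/\<eta>)) (2/\<eta>) z f x + s *\<^sub>R \<psi> x)"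
proof -
  define r where "r = R / exp (2/\<eta>)"
  have r: "0 < r" "r \<le> R" using R \<eta> by (auto simp: r_def divide_le_eq)
  have "0 < \<eta>*r/8" using \<eta> r by simp
  then obtain w where w: "w \<noteq> z" "dist w z < \<eta>*r/8"
    using z unfolding islimpt_approachable by blast
  define \<tau> where "\<tau> = dist w z"
  have "\<eta>*r \<le> r/2" using mult_right_mono[OF \<eta>(2), of r] r by simp
  moreover have "0 < \<tau>" "\<tau> \<le> \<eta>*r/8" using w by (auto simp: \<tau>_def)
  ultimately have \<tau>: "0 < \<tau>" "\<tau> \<le> \<eta>*r/8" "2*\<tau> < R" using r by linarith+
  have tent_far: "tent w \<tau> e x = 0" if "2*\<tau> \<le> dist x z" for x
    using dist_triangle[of x z w] that by (intro tent_eq_0) (simp add: \<tau>_def dist_commute)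
  show thesis
  proof (rule that[of "tent w \<tau> e"])
    show lip: "1-lipschitz_on UNIV (tent w \<tau> e)" by (rule lipschitz_on_tent[OF e])
    show "1 \<le> lipnorm (tent w \<tau> e)"
      using e w by (intro one_le_lipnorm[OF lip, of w z]) (simp add: tent_def \<tau>_def dist_commute)
    show "dist x z < R" if "tent w \<tau> e x \<noteq> 0" for x
      using tent_far[of x] that \<tau> by fastforce
    show "1-lipschitz_on UNIV (\<lambda>x. flatten (R / exp (2/\<eta>)) (2/\<eta>) z f x + s *\<^sub>R tent w \<tau> e x)"
      if "(1-\<eta>)-lipschitz_on UNIV f" "\<bar>s\<bar> = 1" for f s
      unfolding r_def[symmetric]
    proof (rule lipschitz_on_add_bump[OF lipschitz_on_flatten_contraction[OF that(1) \<eta>(1) r(1)] \<eta> _ lip])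
      show "flatten r (2/\<eta>) z f x = flatten r (2/\<eta>) z f z" if "dist x z \<le> r" for x
        using that r(1) by (simp add: flatten_eq_center)
      show "norm (tent w \<tau> e x) \<le> \<tau>" for x using \<tau>(1) by (intro norm_tent_le[OF e]) simp
    qed (use tent_far \<tau>(2) r(1) that(2) in auto)
  qed
qed

section \<open>Symmetric perturbations\<close>

definition local_symmetric_perturbation ::
    "'a::metric_space \<Rightarrow> 'i set \<Rightarrow> ('i \<Rightarrow> 'a \<Rightarrow> 'b::real_normed_vector) \<Rightarrow> real \<Rightarrow> 'a \<Rightarrow>
      ('i \<Rightarrow> 'a \<Rightarrow> 'b) \<Rightarrow> ('a \<Rightarrow> 'b) \<Rightarrow> bool" where
  "local_symmetric_perturbation p I F R z g \<psi> \<longleftrightarrow>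
    \<psi> \<in> Lip0_ball p \<and> 1 \<le> lipnorm \<psi> \<and> (\<forall>x. \<psi> x \<noteq> 0 \<longrightarrow> dist x z < R) \<and>
    (\<forall>i\<in>I. g i \<in> Lip0_ball p \<and> (\<lambda>x. g i x + \<psi> x) \<in> Lip0_ball p \<and> (\<lambda>x. g i x - \<psi> x) \<in> Lip0_ball p \<and>
      (\<lambda>x. F i x - g i x) \<in> Lip0 p \<and> 2-lipschitz_on UNIV (\<lambda>x. F i x - g i x) \<and>
      (\<forall>x. F i x - g i x \<noteq> 0 \<longrightarrow> dist x z < R))"

lemma exists_local_perturbation:
  fixes p z :: "'a::metric_space" and F :: "'i \<Rightarrow> 'a \<Rightarrow> 'b::real_normed_vector" and e :: 'b
  assumes z: "z islimpt UNIV" and e: "norm e = 1" and \<eta>: "0 < \<eta>" "\<eta> \<le> 1/2"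
    and R: "0 < R" "R \<le> dist p z"
    and F: "\<And>i. i \<in> I \<Longrightarrow> (1-\<eta>)-lipschitz_on UNIV (F i)" "\<And>i. i \<in> I \<Longrightarrow> F i p = 0"
  shows "\<exists>g \<psi>. local_symmetric_perturbation p I F R z g \<psi>"
proof -
  obtain \<psi> :: "'a \<Rightarrow> 'b" where \<psi>: "1-lipschitz_on UNIV \<psi>" "1 \<le> lipnorm \<psi>"
    and \<psi>_supp: "\<And>x. \<psi> x \<noteq> 0 \<Longrightarrow> dist x z < R"
    and flat_\<psi>: "\<And>f s. (1-\<eta>)-lipschitz_on UNIV f \<Longrightarrow> \<bar>s\<bar> = 1 \<Longrightarrow>
      1-lipschitz_on UNIV (\<lambda>x. flatten (R / exp (2/\<eta>)) (2/\<eta>) z f x + s *\<^sub>R \<psi> x)"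
    by (rule exists_symmetric_bump[OF z e \<eta> R(1)]) blast
  define g where "g i = flatten (R / exp (2/\<eta>)) (2/\<eta>) z (F i)" for i
  have g_far: "g i x = F i x" if "R \<le> dist x z" for i x
    unfolding g_def using that \<eta>(1) R by (intro flatten_eq_far) auto
  have \<psi>_p: "\<psi> p = 0" using \<psi>_supp[of p] R(2) by (auto simp: dist_commute)
  have g_p: "g i p = 0" if "i \<in> I" for i using g_far[of p i] F(2)[OF that] R(2) by (simp add: dist_commute)
  have g_lip: "(1 - \<eta>/2)-lipschitz_on UNIV (g i)" if "i \<in> I" for i
    unfolding g_def using F(1)[OF that] \<eta>(1) R by (simp add: lipschitz_on_flatten_contraction)
  have g_pm: "(\<lambda>x. g i x + s *\<^sub>R \<psi> x) \<in> Lip0_ball p" if "i \<in> I" "\<bar>s\<bar> = 1" for i s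
    using Lip0_ballI[OF flat_\<psi>[OF F(1)[OF that(1)] that(2)] order_refl] g_p[OF that(1)] \<psi>_p
    by (simp add: g_def)
  have diff_lip: "2-lipschitz_on UNIV (\<lambda>x. F i x - g i x)" if "i \<in> I" for i
    by (rule lipschitz_on_le[OF lipschitz_on_diff[OF F(1)[OF that] g_lip[OF that]]]) (use \<eta> in simp)
  show ?thesis
    unfolding local_symmetric_perturbation_def
  proof (intro exI[of _ g] exI[of _ \<psi>] conjI allI impI ballI)
    show "\<psi> \<in> Lip0_ball p" by (rule Lip0_ballI[OF \<psi>(1) order_refl \<psi>_p])
    show "1 \<le> lipnorm \<psi>" by (rule \<psi>(2))
    show "dist x z < R" if "\<psi> x \<noteq> 0" for x using \<psi>_supp that .
    fix i assume i: "i \<in> I"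
    show "g i \<in> Lip0_ball p" using \<eta>(1) by (intro Lip0_ballI[OF g_lip[OF i] _ g_p[OF i]]) simp
    show "(\<lambda>x. g i x + \<psi> x) \<in> Lip0_ball p" "(\<lambda>x. g i x - \<psi> x) \<in> Lip0_ball p"
      using g_pm[OF i, of 1] g_pm[OF i, of "-1"] by simp_all
    show "(\<lambda>x. F i x - g i x) \<in> Lip0 p" using F(2)[OF i] g_p[OF i] by (intro Lip0I[OF diff_lip[OF i]]) simp
    show "2-lipschitz_on UNIV (\<lambda>x. F i x - g i x)" by (rule diff_lip[OF i])
    show "dist x z < R" if "F i x - g i x \<noteq> 0" for x
      using that g_far[of x i] by (cases "R \<le> dist x z") auto
  qed
qed

lemma exists_local_perturbations:
  fixes p :: "'a::metric_space" and F :: "'i \<Rightarrow> 'a \<Rightarrow> 'b::real_normed_vector" and e :: 'b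
  assumes Z: "\<And>z. z \<in> Z \<Longrightarrow> z islimpt UNIV" and e: "norm e = 1" and \<eta>: "0 < \<eta>" "\<eta> \<le> 1/2"
    and R: "0 < R" "\<And>z. z \<in> Z \<Longrightarrow> R \<le> dist p z"
    and F: "\<And>i. i \<in> I \<Longrightarrow> (1-\<eta>)-lipschitz_on UNIV (F i)" "\<And>i. i \<in> I \<Longrightarrow> F i p = 0"
  shows "\<exists>G \<Psi>. \<forall>z\<in>Z. local_symmetric_perturbation p I F R z (G z) (\<Psi> z)"
proof -
  have "\<forall>z\<in>Z. \<exists>g \<psi>. local_symmetric_perturbation p I F R z g \<psi>"
  proof
    fix z assume "z \<in> Z"
    show "\<exists>g \<psi>. local_symmetric_perturbation p I F R z g \<psi>"
      by (rule exists_local_perturbation[OF Z[OF \<open>z \<in> Z\<close>] e \<eta> R(1) R(2)[OF \<open>z \<in> Z\<close>] F])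
  qed
  from bchoice[OF this] obtain G where "\<forall>z\<in>Z. \<exists>\<psi>. local_symmetric_perturbation p I F R z (G z) \<psi>" ..
  from bchoice[OF this] obtain \<Psi> where "\<forall>z\<in>Z. local_symmetric_perturbation p I F R z (G z) (\<Psi> z)" ..
  then show ?thesis by blast
qed

lemma Lip0_dual_sphere_exists_small_perturbation:
  fixes \<phi> :: "'i \<Rightarrow> ('a::metric_space \<Rightarrow> 'b::real_normed_vector) \<Rightarrow> real"
  assumes I: "finite I" and \<phi>: "\<And>i. i \<in> I \<Longrightarrow> \<phi> i \<in> Lip0_dual_sphere p"
    and K: "\<And>i. i \<in> I \<Longrightarrow> \<forall>f\<in>Lip0 p. \<bar>\<phi> i f\<bar> \<le> K i * lipnorm f"
    and Z: "finite Z" "(\<Sum>i\<in>I. 6 * \<bar>K i\<bar>) < real (card Z) * \<beta>"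
    and sep: "\<And>z z'. z \<in> Z \<Longrightarrow> z' \<in> Z \<Longrightarrow> z \<noteq> z' \<Longrightarrow> 2*R \<le> dist z z'"
    and u: "\<And>i z. i \<in> I \<Longrightarrow> z \<in> Z \<Longrightarrow> u i z \<in> Lip0 p"
    and u_lip: "\<And>i z. i \<in> I \<Longrightarrow> z \<in> Z \<Longrightarrow> 2-lipschitz_on UNIV (u i z)"
    and u_supp: "\<And>i z x. i \<in> I \<Longrightarrow> z \<in> Z \<Longrightarrow> u i z x \<noteq> 0 \<Longrightarrow> dist x z < R"
    and v: "\<And>z. z \<in> Z \<Longrightarrow> v z \<in> Lip0_ball p"
    and v_supp: "\<And>z x. z \<in> Z \<Longrightarrow> v z x \<noteq> 0 \<Longrightarrow> dist x z < R"
  shows "\<exists>z\<in>Z. \<forall>i\<in>I. \<bar>\<phi> i (u i z)\<bar> + \<bar>\<phi> i (v z)\<bar> < \<beta>"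
proof -
  have v_Lip0: "v z \<in> Lip0 p" if "z \<in> Z" for z using v[OF that] Lip0_ball_subset by blast
  have v_lip: "1-lipschitz_on UNIV (v z)" if "z \<in> Z" for z using Lip0_ball_lipschitz[OF v[OF that]] .
  define Q where "Q z = (\<Sum>i\<in>I. \<bar>\<phi> i (u i z)\<bar> + \<bar>\<phi> i (v z)\<bar>)" for z
  have "(\<Sum>z\<in>Z. Q z) = (\<Sum>i\<in>I. (\<Sum>z\<in>Z. \<bar>\<phi> i (u i z)\<bar>) + (\<Sum>z\<in>Z. \<bar>\<phi> i (v z)\<bar>))"
    unfolding Q_def by (subst sum.swap) (simp add: sum.distrib)
  also have "\<dots> \<le> (\<Sum>i\<in>I. 2 * 2 * \<bar>K i\<bar> + 2 * 1 * \<bar>K i\<bar>)"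
  proof (rule sum_mono, rule add_mono)
    fix i assume i: "i \<in> I"
    show "(\<Sum>z\<in>Z. \<bar>\<phi> i (u i z)\<bar>) \<le> 2 * 2 * \<bar>K i\<bar>"
      by (rule Lip0_dual_sphere_sum_abs_le[OF \<phi>[OF i] K[OF i] Z(1) u[OF i] u_lip[OF i] _ u_supp[OF i] sep])
        simp_all
    show "(\<Sum>z\<in>Z. \<bar>\<phi> i (v z)\<bar>) \<le> 2 * 1 * \<bar>K i\<bar>"
      by (rule Lip0_dual_sphere_sum_abs_le[OF \<phi>[OF i] K[OF i] Z(1) v_Lip0 v_lip _ v_supp sep]) simp_all
  qed
  also have "\<dots> < real (card Z) * \<beta>" using Z(2) by simp
  finally obtain z where z: "z \<in> Z" "Q z < \<beta>" using exists_less_of_sum_less[OF Z(1)] by blast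
  have "\<bar>\<phi> i (u i z)\<bar> + \<bar>\<phi> i (v z)\<bar> < \<beta>" if "i \<in> I" for i
    using member_le_sum[OF that _ I, of "\<lambda>i. \<bar>\<phi> i (u i z)\<bar> + \<bar>\<phi> i (v z)\<bar>"] z(2)
    by (simp add: Q_def)
  with z(1) show ?thesis by blast
qed

lemma exists_symmetric_perturbation:
  fixes p :: "'a::metric_space" and F :: "'i \<Rightarrow> 'a \<Rightarrow> 'b::real_normed_vector" and e :: 'b
  assumes limpts: "infinite {x::'a. x islimpt UNIV}" and e: "norm e = 1" and I: "finite I"
    and \<phi>: "\<And>i. i \<in> I \<Longrightarrow> \<phi> i \<in> Lip0_dual_sphere p"
    and F: "\<And>i. i \<in> I \<Longrightarrow> (1-\<eta>)-lipschitz_on UNIV (F i)" "\<And>i. i \<in> I \<Longrightarrow> F i p = 0"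
    and \<eta>: "0 < \<eta>" "\<eta> \<le> 1/2" and \<beta>: "0 < \<beta>"
  obtains \<psi> g where "\<psi> \<in> Lip0_ball p" "1 \<le> lipnorm \<psi>"
    "\<And>i. i \<in> I \<Longrightarrow> g i \<in> Lip0_ball p"
    "\<And>i. i \<in> I \<Longrightarrow> \<bar>\<phi> i (F i) - \<phi> i (g i)\<bar> + \<bar>\<phi> i \<psi>\<bar> < \<beta>"
    "\<And>i. i \<in> I \<Longrightarrow> (\<lambda>x. g i x + \<psi> x) \<in> Lip0_ball p"
    "\<And>i. i \<in> I \<Longrightarrow> (\<lambda>x. g i x - \<psi> x) \<in> Lip0_ball p"
proof -
  have "\<forall>i\<in>I. \<exists>K. \<forall>f\<in>Lip0 p. \<bar>\<phi> i f\<bar> \<le> K * lipnorm f"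
    using \<phi> Lip0_dual_sphere_bounded by blast
  from bchoice[OF this] obtain K where "\<forall>i\<in>I. \<forall>f\<in>Lip0 p. \<bar>\<phi> i f\<bar> \<le> K i * lipnorm f" ..
  then have K: "\<And>i. i \<in> I \<Longrightarrow> \<forall>f\<in>Lip0 p. \<bar>\<phi> i f\<bar> \<le> K i * lipnorm f" by blast
  obtain N :: nat where N: "(\<Sum>i\<in>I. 6 * \<bar>K i\<bar>) < real N * \<beta>"
    using ex_less_of_nat_mult[OF \<beta>] by blast
  obtain Z R where Z: "finite Z" "card Z = N" "\<And>z. z \<in> Z \<Longrightarrow> z islimpt UNIV" and R: "0 < R"
    "\<And>z. z \<in> Z \<Longrightarrow> R \<le> dist p z" and sep: "\<And>z z'. z \<in> Z \<Longrightarrow> z' \<in> Z \<Longrightarrow> z \<noteq> z' \<Longrightarrow> 2*R \<le> dist z z'"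
    using exists_separated_limit_points[OF limpts] by blast
  obtain G \<Psi> where "\<forall>z\<in>Z. local_symmetric_perturbation p I F R z (G z) (\<Psi> z)"
    using exists_local_perturbations[where Z = Z and I = I and F = F, OF Z(3) e \<eta> R F] by blast
  then have \<Psi>: "\<And>z. z \<in> Z \<Longrightarrow> \<Psi> z \<in> Lip0_ball p" "\<And>z. z \<in> Z \<Longrightarrow> 1 \<le> lipnorm (\<Psi> z)"
      "\<And>z x. z \<in> Z \<Longrightarrow> \<Psi> z x \<noteq> 0 \<Longrightarrow> dist x z < R"
    and G: "\<And>i z. i \<in> I \<Longrightarrow> z \<in> Z \<Longrightarrow> G z i \<in> Lip0_ball p"
      "\<And>i z. i \<in> I \<Longrightarrow> z \<in> Z \<Longrightarrow> (\<lambda>x. G z i x + \<Psi> z x) \<in> Lip0_ball p"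
      "\<And>i z. i \<in> I \<Longrightarrow> z \<in> Z \<Longrightarrow> (\<lambda>x. G z i x - \<Psi> z x) \<in> Lip0_ball p"
    and diff: "\<And>i z. i \<in> I \<Longrightarrow> z \<in> Z \<Longrightarrow> (\<lambda>x. F i x - G z i x) \<in> Lip0 p"
      "\<And>i z. i \<in> I \<Longrightarrow> z \<in> Z \<Longrightarrow> 2-lipschitz_on UNIV (\<lambda>x. F i x - G z i x)"
      "\<And>i z x. i \<in> I \<Longrightarrow> z \<in> Z \<Longrightarrow> F i x - G z i x \<noteq> 0 \<Longrightarrow> dist x z < R"
    unfolding local_symmetric_perturbation_def by blast+
  have card: "(\<Sum>i\<in>I. 6 * \<bar>K i\<bar>) < real (card Z) * \<beta>" using N Z(2) by simp
  have "\<exists>z\<in>Z. \<forall>i\<in>I. \<bar>\<phi> i (\<lambda>x. F i x - G z i x)\<bar> + \<bar>\<phi> i (\<Psi> z)\<bar> < \<beta>"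
    using Lip0_dual_sphere_exists_small_perturbation[OF I \<phi> K Z(1) card sep diff \<Psi>(1,3)] .
  then obtain z where z: "z \<in> Z"
    and small: "\<And>i. i \<in> I \<Longrightarrow> \<bar>\<phi> i (\<lambda>x. F i x - G z i x)\<bar> + \<bar>\<phi> i (\<Psi> z)\<bar> < \<beta>"
    by blast
  show thesis
  proof (rule that[of "\<Psi> z" "G z"])
    fix i assume i: "i \<in> I"
    have "G z i \<in> Lip0 p" using G(1)[OF i z] Lip0_ball_subset by blast
    then have "\<phi> i (\<lambda>x. F i x - G z i x) = \<phi> i (F i) - \<phi> i (G z i)"
      by (rule Lip0_dual_sphere_diff[OF \<phi>[OF i] Lip0I[OF F(1)[OF i] F(2)[OF i]]])
    with small[OF i] show "\<bar>\<phi> i (F i) - \<phi> i (G z i)\<bar> + \<bar>\<phi> i (\<Psi> z)\<bar> < \<beta>" by simp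
  qed (use \<Psi> G z in auto)
qed

lemma exists_symmetric_slice_witnesses:
  fixes p :: "'a::metric_space" and \<phi> :: "'i \<Rightarrow> ('a \<Rightarrow> 'b::real_normed_vector) \<Rightarrow> real" and e :: 'b
  assumes limpts: "infinite {x::'a. x islimpt UNIV}" and e: "norm e = 1" and I: "finite I"
    and \<phi>: "\<And>i. i \<in> I \<Longrightarrow> \<phi> i \<in> Lip0_dual_sphere p" and \<alpha>: "\<And>i. i \<in> I \<Longrightarrow> 0 < \<alpha> i"
  obtains \<psi> g where "\<psi> \<in> Lip0_ball p" "1 \<le> lipnorm \<psi>"
    "\<And>i. i \<in> I \<Longrightarrow> g i \<in> Lip0_slice p (\<phi> i) (\<alpha> i)"
    "\<And>i. i \<in> I \<Longrightarrow> (\<lambda>x. g i x + \<psi> x) \<in> Lip0_slice p (\<phi> i) (\<alpha> i)"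
    "\<And>i. i \<in> I \<Longrightarrow> (\<lambda>x. g i x - \<psi> x) \<in> Lip0_slice p (\<phi> i) (\<alpha> i)"
proof -
  define \<eta> where "\<eta> = Min (insert 1 (\<alpha> ` I)) / 4"
  have "Min (insert 1 (\<alpha> ` I)) \<le> \<alpha> i" if "i \<in> I" for i by (rule Min_le) (use I that in auto)
  moreover have "0 < Min (insert 1 (\<alpha> ` I))" "Min (insert 1 (\<alpha> ` I)) \<le> 1"
    using I \<alpha> by (auto simp: Min_gr_iff intro: Min_le)
  ultimately have \<eta>: "0 < \<eta>" "\<eta> \<le> 1/2" "\<And>i. i \<in> I \<Longrightarrow> 4 * \<eta> \<le> \<alpha> i"
    unfolding \<eta>_def by auto
  have "\<exists>F. \<forall>i\<in>I. (1-\<eta>)-lipschitz_on UNIV (F i) \<and> F i p = 0 \<and> 1 - 2*\<eta> < \<phi> i (F i)"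
    using \<eta> by (intro Lip0_dual_sphere_almost_norming_contractions[OF \<phi>]) simp_all
  then obtain F where "\<forall>i\<in>I. (1-\<eta>)-lipschitz_on UNIV (F i) \<and> F i p = 0 \<and> 1 - 2*\<eta> < \<phi> i (F i)" ..
  then have F: "\<And>i. i \<in> I \<Longrightarrow> (1-\<eta>)-lipschitz_on UNIV (F i)" "\<And>i. i \<in> I \<Longrightarrow> F i p = 0"
    "\<And>i. i \<in> I \<Longrightarrow> 1 - 2*\<eta> < \<phi> i (F i)"
    by blast+
  have "0 < 2*\<eta>" using \<eta> by simp
  show thesis
  proof (rule exists_symmetric_perturbation[OF limpts e I \<phi> F(1,2) \<eta>(1,2) \<open>0 < 2*\<eta>\<close>])
    fix \<psi> g
    assume \<psi>: "\<psi> \<in> Lip0_ball p" "1 \<le> lipnorm \<psi>" and g: "\<And>i. i \<in> I \<Longrightarrow> g i \<in> Lip0_ball p"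
      and small: "\<And>i. i \<in> I \<Longrightarrow> \<bar>\<phi> i (F i) - \<phi> i (g i)\<bar> + \<bar>\<phi> i \<psi>\<bar> < 2*\<eta>"
      and pm: "\<And>i. i \<in> I \<Longrightarrow> (\<lambda>x. g i x + \<psi> x) \<in> Lip0_ball p"
        "\<And>i. i \<in> I \<Longrightarrow> (\<lambda>x. g i x - \<psi> x) \<in> Lip0_ball p"
    have slices: "g i \<in> Lip0_slice p (\<phi> i) (\<alpha> i)" "(\<lambda>x. g i x + \<psi> x) \<in> Lip0_slice p (\<phi> i) (\<alpha> i)"
      "(\<lambda>x. g i x - \<psi> x) \<in> Lip0_slice p (\<phi> i) (\<alpha> i)" if "i \<in> I" for i
    proof -
      have "1 - \<alpha> i < \<phi> i (g i) - \<bar>\<phi> i \<psi>\<bar>"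
        using F(3)[OF that] small[OF that] \<eta>(3)[OF that] by linarith
      from Lip0_slice_symmetric[OF \<phi>[OF that] g[OF that] \<psi>(1) pm(1)[OF that] pm(2)[OF that] this]
      show "g i \<in> Lip0_slice p (\<phi> i) (\<alpha> i)" "(\<lambda>x. g i x + \<psi> x) \<in> Lip0_slice p (\<phi> i) (\<alpha> i)"
        "(\<lambda>x. g i x - \<psi> x) \<in> Lip0_slice p (\<phi> i) (\<alpha> i)" by simp_all
    qed
    show thesis by (rule that[OF \<psi> slices])
  qed
qed

theorem theorem4p5:
  fixes p :: "'a::metric_space"
  assumes "infinite {x::'a. x islimpt (UNIV :: 'a set)}"
    and "\<exists>x::'b::banach. x \<noteq> 0"
  shows "Lip0_SSD2P p TYPE('a \<Rightarrow> 'b)"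
  unfolding Lip0_SSD2P_def
proof (intro allI impI)
  fix k and \<phi>s :: "nat \<Rightarrow> ('a \<Rightarrow> 'b) \<Rightarrow> real" and \<alpha>s :: "nat \<Rightarrow> real" and \<epsilon> :: real
  assume "(\<forall>i\<in>{1..k}. \<phi>s i \<in> Lip0_dual_sphere p \<and> \<alpha>s i > 0) \<and> \<epsilon> > 0"
  then have \<phi>: "\<And>i. i \<in> {1..k} \<Longrightarrow> \<phi>s i \<in> Lip0_dual_sphere p"
    and \<alpha>: "\<And>i. i \<in> {1..k} \<Longrightarrow> 0 < \<alpha>s i" and "0 < \<epsilon>" by auto
  obtain x :: 'b where "x \<noteq> 0" using assms(2) by blast
  then have e: "norm (sgn x) = 1" by (simp add: norm_sgn)
  show "\<exists>xs \<psi>. (\<forall>i\<in>{1..k}. xs i \<in> Lip0_slice p (\<phi>s i) (\<alpha>s i)) \<and> \<psi> \<in> Lip0_ball p \<and>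
      1 - \<epsilon> < lipnorm \<psi> \<and> (\<forall>i\<in>{1..k}. (\<lambda>x. xs i x + \<psi> x) \<in> Lip0_slice p (\<phi>s i) (\<alpha>s i) \<and>
        (\<lambda>x. xs i x - \<psi> x) \<in> Lip0_slice p (\<phi>s i) (\<alpha>s i))"
  proof (rule exists_symmetric_slice_witnesses[OF assms(1) e finite_atLeastAtMost \<phi> \<alpha>])
    fix \<psi> g
    assume "\<psi> \<in> Lip0_ball p" "1 \<le> lipnorm \<psi>" "\<And>i. i \<in> {1..k} \<Longrightarrow> g i \<in> Lip0_slice p (\<phi>s i) (\<alpha>s i)"
      "\<And>i. i \<in> {1..k} \<Longrightarrow> (\<lambda>x. g i x + \<psi> x) \<in> Lip0_slice p (\<phi>s i) (\<alpha>s i)"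
      "\<And>i. i \<in> {1..k} \<Longrightarrow> (\<lambda>x. g i x - \<psi> x) \<in> Lip0_slice p (\<phi>s i) (\<alpha>s i)"
    with \<open>0 < \<epsilon>\<close> show ?thesis by (intro exI[of _ g] exI[of _ \<psi>]) auto
  qed
qed

end
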